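(* Let $n\ge1$, let $f_1,\dots,f_n:\mathbb{R}^d\to\mathbb{R}$ be $L$-smooth (i.e. $\|\nabla f_i(x)-\nabla f_i(y)\|\le L\|x-y\|$ for all $x,y$), and $f=\frac1n\sum_i f_i$. Let $x_0,\dots,x_{T-1}$, $\nabla_0,\dots,\nabla_{T-1}$ and $\gamma_0,\dots,\gamma_{T-1}$ be the iterates, gradient estimators and step-sizes produced by AdaSpider (described in the context) with input $x_0$, $\beta_0>0$, $G_0>0$. Then \[ \mathbb{E}\Big[\sum_{t=0}^{T-1}\gamma_t\|\nabla_t-\nabla f(x_t)\|^2\Big]\le L^2n\,\mathbb{E}\Big[\sum_{t=0}^{T-1}\gamma_t^3\|\nabla_t\|^2\Big]. \]
   Context: $\|\cdot\|$ is the Euclidean norm. AdaSpider: input $x_0\in\mathbb{R}^d$, $\beta_0>0$, $G_0>0$, horizon $T\ge1$. For $t=0,1,\dots,T-1$: if $t \bmod n=0$, set $\nabla_t:=\nabla f(x_t)$; otherwise pick $i_t\in\{1,\dots,n\}$ uniformly at random (independently of the past) and set $\nabla_t:=\nabla f_{i_t}(x_t)-\nabla f_{i_t}(x_{t-1})+\nabla_{t-1}$. Then set $\gamma_t:=1\big/\big(n^{1/4}\beta_0\sqrt{n^{1/2}G_0^2+\sum_{s=0}^t\|\nabla_s\|^2}\big)$ and $x_{t+1}:=x_t-\gamma_t\nabla_t$. *)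

theory Defs
  imports "HOL-Analysis.Analysis" "HOL-Probability.Probability"
begin

definition ada_stepsize :: "nat \<Rightarrow> real \<Rightarrow> real \<Rightarrow> real \<Rightarrow> real" where
  "ada_stepsize n \<beta>0 G0 S = 1 / (root 4 (real n) * \<beta>0 * sqrt (sqrt (real n) * G0\<^sup>2 + S))"

text \<open>State of AdaSpider at time t: (x_t, nabla_t, sum_{s<=t} |nabla_s|^2), for a
  given realisation \<omega> of the random indices (\<omega> t = i_t, used when t mod n \<noteq> 0).
  g i is the gradient of f_i, gF the gradient of f.\<close>
fun ada_state :: "nat \<Rightarrow> (nat \<Rightarrow> 'a::euclidean_space \<Rightarrow> 'a) \<Rightarrow> ('a \<Rightarrow> 'a) \<Rightarrow> 'a \<Rightarrow> real \<Rightarrow> real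
    \<Rightarrow> (nat \<Rightarrow> nat) \<Rightarrow> nat \<Rightarrow> 'a \<times> 'a \<times> real" where
  "ada_state n g gF x0 \<beta>0 G0 \<omega> 0 = (x0, gF x0, (norm (gF x0))\<^sup>2)"
| "ada_state n g gF x0 \<beta>0 G0 \<omega> (Suc t) =
     (let (x, d, S) = ada_state n g gF x0 \<beta>0 G0 \<omega> t;
          x' = x - ada_stepsize n \<beta>0 G0 S *\<^sub>R d;
          d' = (if Suc t mod n = 0 then gF x'
                else g (\<omega> (Suc t)) x' - g (\<omega> (Suc t)) x + d)
      in (x', d', S + (norm d')\<^sup>2))"

definition ada_x where "ada_x n g gF x0 \<beta>0 G0 \<omega> t = fst (ada_state n g gF x0 \<beta>0 G0 \<omega> t)"
definition ada_grad where "ada_grad n g gF x0 \<beta>0 G0 \<omega> t = fst (snd (ada_state n g gF x0 \<beta>0 G0 \<omega> t))"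
definition ada_gamma where
  "ada_gamma n g gF x0 \<beta>0 G0 \<omega> t = ada_stepsize n \<beta>0 G0 (snd (snd (ada_state n g gF x0 \<beta>0 G0 \<omega> t)))"

text \<open>Sample space: index sequences i_0..i_{T-1}, each uniform on {1..n}, independent.\<close>
definition ada_omega :: "nat \<Rightarrow> nat \<Rightarrow> (nat \<Rightarrow> nat) set" where
  "ada_omega n T = PiE {..<T} (\<lambda>_. {1..n})"

end

theory Submission
  imports Defs
begin

(* Write e_t = nabla_t - grad f(x_t). It vanishes at the start of every epoch (t mod n = 0), and
   otherwise e_(t+1) = e_t + (a_i - mean_j a_j) with a_j = grad f_j(x_(t+1)) - grad f_j(x_t) and
   i = i_(t+1). Neither x_(t+1) nor gamma_t depends on i_(t+1), so averaging over i_(t+1) kills the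
   cross term, and L-smoothness gives
     E[gamma_t |e_(t+1)|^2] <= E[gamma_t |e_t|^2] + L^2 E[gamma_t^3 |nabla_t|^2].
   Since the step sizes are non-increasing, the left side dominates E[gamma_(t+1) |e_(t+1)|^2].
   Unrolling within an epoch, each E[gamma_s^3 |nabla_s|^2] is charged to at most n errors. *)

lemma sum_PiE_resample:
  fixes F :: "('a \<Rightarrow> 'b) \<Rightarrow> 'c::comm_semiring_1"
  assumes "t \<in> S"
  shows "(\<Sum>w\<in>PiE S A. \<Sum>i\<in>A t. F (w(t := i))) = of_nat (card (A t)) * (\<Sum>w\<in>PiE S A. F w)"
proof -
  define S' where "S' = S - {t}"
  have inj: "inj_on (\<lambda>(y, h). h(t := y)) (A t \<times> PiE S' A)"
    by (rule inj_combinator) (simp add: S'_def)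
  have reindex: "(\<Sum>w\<in>PiE S A. G w) = (\<Sum>(y, h)\<in>A t \<times> PiE S' A. G (h(t := y)))"
    for G :: "('a \<Rightarrow> 'b) \<Rightarrow> 'c"
  proof -
    have S: "PiE S A = (\<lambda>(y, h). h(t := y)) ` (A t \<times> PiE S' A)"
      using assms PiE_insert_eq[of t S' A] by (simp add: S'_def insert_absorb)
    show ?thesis
      unfolding S by (simp only: sum.reindex[OF inj]) (simp add: case_prod_unfold)
  qed
  have "(\<Sum>w\<in>PiE S A. \<Sum>i\<in>A t. F (w(t := i)))
      = (\<Sum>(y, h)\<in>A t \<times> PiE S' A. \<Sum>i\<in>A t. F (h(t := i)))"
    by (simp add: reindex)
  also have "\<dots> = of_nat (card (A t)) * (\<Sum>h\<in>PiE S' A. \<Sum>i\<in>A t. F (h(t := i)))"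
    by (simp add: sum.cartesian_product[symmetric])
  also have "(\<Sum>h\<in>PiE S' A. \<Sum>i\<in>A t. F (h(t := i)))
      = (\<Sum>(i, h)\<in>A t \<times> PiE S' A. F (h(t := i)))"
    by (subst sum.swap) (simp add: sum.cartesian_product)
  also have "\<dots> = (\<Sum>w\<in>PiE S A. F w)"
    by (simp add: reindex)
  finally show ?thesis .
qed

lemma sum_norm_add_centered_le:
  fixes a :: "'i \<Rightarrow> 'a::real_inner" and c :: real
  assumes "finite I" and "\<And>i. i \<in> I \<Longrightarrow> norm (a i) \<le> c"
  defines "m \<equiv> (1 / card I) *\<^sub>R (\<Sum>i\<in>I. a i)"
  shows "(\<Sum>i\<in>I. (norm (e + (a i - m)))\<^sup>2) \<le> card I * (norm e)\<^sup>2 + card I * c\<^sup>2"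
proof (cases "I = {}")
  case False
  have sum_a: "(\<Sum>i\<in>I. a i) = card I *\<^sub>R m"
    using False assms(1) by (simp add: m_def)
  have "(\<Sum>i\<in>I. (norm (e + (a i - m)))\<^sup>2)
      = (\<Sum>i\<in>I. (e - m) \<bullet> (e - m) + 2 * ((e - m) \<bullet> a i) + a i \<bullet> a i)"
    by (rule sum.cong) (auto simp: power2_norm_eq_inner algebra_simps inner_commute)
  also have "\<dots> = card I * ((e - m) \<bullet> (e - m)) + 2 * ((e - m) \<bullet> (\<Sum>i\<in>I. a i))
      + (\<Sum>i\<in>I. (norm (a i))\<^sup>2)"
    by (simp add: sum.distrib inner_sum_right sum_distrib_left power2_norm_eq_inner)
  also have "\<dots> = card I * ((norm e)\<^sup>2 - (norm m)\<^sup>2) + (\<Sum>i\<in>I. (norm (a i))\<^sup>2)"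
    by (simp add: sum_a power2_norm_eq_inner algebra_simps inner_commute)
  also have "\<dots> \<le> card I * (norm e)\<^sup>2 + (\<Sum>i\<in>I. c\<^sup>2)"
  proof -
    have "(\<Sum>i\<in>I. (norm (a i))\<^sup>2) \<le> (\<Sum>i\<in>I. c\<^sup>2)"
      using assms(2) by (intro sum_mono power_mono) auto
    moreover have "0 \<le> card I * (norm m)\<^sup>2" by simp
    ultimately show ?thesis unfolding right_diff_distrib by linarith
  qed
  finally show ?thesis by simp
qed simp

lemma sum_sliding_window_le:
  fixes R :: "nat \<Rightarrow> real"
  assumes "\<And>s. R s \<ge> 0"
  shows "(\<Sum>t<T. \<Sum>s\<in>{t - n..<t}. R s) \<le> n * (\<Sum>s<T. R s)"
proof -
  have window: "{t - n..<t} = {s \<in> {..<T}. t - n \<le> s \<and> s < t}" if "t < T" for t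
    using that by auto
  have "(\<Sum>t<T. \<Sum>s\<in>{t - n..<t}. R s)
      = (\<Sum>t<T. \<Sum>s\<in>{s \<in> {..<T}. t - n \<le> s \<and> s < t}. R s)"
    by (intro sum.cong refl) (simp add: window)
  also have "\<dots> = (\<Sum>s<T. \<Sum>t\<in>{t \<in> {..<T}. t - n \<le> s \<and> s < t}. R s)"
    by (rule sum.swap_restrict) simp_all
  also have "\<dots> \<le> (\<Sum>s<T. n * R s)"
  proof (rule sum_mono)
    fix s
    have "{t \<in> {..<T}. t - n \<le> s \<and> s < t} \<subseteq> {Suc s..s + n}" by auto
    then have "card {t \<in> {..<T}. t - n \<le> s \<and> s < t} \<le> n"
      using card_mono[of "{Suc s..s + n}"] by fastforce
    then show "(\<Sum>t\<in>{t \<in> {..<T}. t - n \<le> s \<and> s < t}. R s) \<le> n * R s"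
      by (simp add: assms mult_right_mono)
  qed
  finally show ?thesis by (simp add: sum_distrib_left)
qed

lemma gradient_of_scaled_sum:
  fixes f :: "'i \<Rightarrow> 'a::real_inner \<Rightarrow> real"
  assumes "\<And>i. i \<in> I \<Longrightarrow> (f i has_derivative (\<lambda>h. g i x \<bullet> h)) (at x)"
    and "(F has_derivative (\<lambda>h. gF \<bullet> h)) (at x)"
    and "F = (\<lambda>x. c * (\<Sum>i\<in>I. f i x))"
  shows "gF = c *\<^sub>R (\<Sum>i\<in>I. g i x)"
proof -
  define v where "v = c *\<^sub>R (\<Sum>i\<in>I. g i x)"
  have "(F has_derivative (\<lambda>h. v \<bullet> h)) (at x)"
    unfolding v_def assms(3) inner_scaleR_left inner_sum_left
    by (intro has_derivative_mult_right has_derivative_sum assms(1))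
  then have "(\<lambda>h. gF \<bullet> h) = (\<lambda>h. v \<bullet> h)"
    using assms(2) has_derivative_unique by blast
  then have "gF = v"
    by (simp only: fun_eq_iff vector_eq_rdot)
  then show ?thesis
    by (simp add: v_def)
qed

lemma ada_state_cong:
  "(\<And>s. s \<le> t \<Longrightarrow> w s = v s) \<Longrightarrow>
    ada_state n g gF x0 \<beta>0 G0 w t = ada_state n g gF x0 \<beta>0 G0 v t"
  by (induction t) (simp_all add: Let_def case_prod_beta)

lemma ada_state_fun_upd_future:
  "t < u \<Longrightarrow> ada_state n g gF x0 \<beta>0 G0 (w(u := i)) t = ada_state n g gF x0 \<beta>0 G0 w t"
  by (rule ada_state_cong) simp

lemma ada_x_Suc:
  "ada_x n g gF x0 \<beta>0 G0 w (Suc t) =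
    ada_x n g gF x0 \<beta>0 G0 w t - ada_gamma n g gF x0 \<beta>0 G0 w t *\<^sub>R ada_grad n g gF x0 \<beta>0 G0 w t"
  by (simp add: ada_x_def ada_gamma_def ada_grad_def Let_def case_prod_beta)

lemma ada_grad_0: "ada_grad n g gF x0 \<beta>0 G0 w 0 = gF (ada_x n g gF x0 \<beta>0 G0 w 0)"
  by (simp add: ada_x_def ada_grad_def)

lemma ada_grad_Suc:
  "ada_grad n g gF x0 \<beta>0 G0 w (Suc t) =
    (if Suc t mod n = 0 then gF (ada_x n g gF x0 \<beta>0 G0 w (Suc t))
     else g (w (Suc t)) (ada_x n g gF x0 \<beta>0 G0 w (Suc t))
        - g (w (Suc t)) (ada_x n g gF x0 \<beta>0 G0 w t) + ada_grad n g gF x0 \<beta>0 G0 w t)"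
  by (simp add: ada_x_def ada_gamma_def ada_grad_def Let_def case_prod_beta)

lemma ada_gamma_eq_stepsize:
  "ada_gamma n g gF x0 \<beta>0 G0 w t =
    ada_stepsize n \<beta>0 G0 (\<Sum>s\<le>t. (norm (ada_grad n g gF x0 \<beta>0 G0 w s))\<^sup>2)"
proof -
  have "snd (snd (ada_state n g gF x0 \<beta>0 G0 w t)) =
      (\<Sum>s\<le>t. (norm (ada_grad n g gF x0 \<beta>0 G0 w s))\<^sup>2)"
    by (induction t) (simp_all add: ada_grad_def Let_def case_prod_beta)
  then show ?thesis by (simp add: ada_gamma_def)
qed

lemma ada_stepsize_pos:
  "n \<ge> 1 \<Longrightarrow> \<beta>0 > 0 \<Longrightarrow> G0 > 0 \<Longrightarrow> S \<ge> 0 \<Longrightarrow> ada_stepsize n \<beta>0 G0 S > 0"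
  unfolding ada_stepsize_def by (intro divide_pos_pos mult_pos_pos real_sqrt_gt_zero add_pos_nonneg) auto

lemma ada_stepsize_antimono:
  "n \<ge> 1 \<Longrightarrow> \<beta>0 > 0 \<Longrightarrow> G0 > 0 \<Longrightarrow> 0 \<le> S \<Longrightarrow> S \<le> S' \<Longrightarrow>
    ada_stepsize n \<beta>0 G0 S' \<le> ada_stepsize n \<beta>0 G0 S"
  unfolding ada_stepsize_def
  by (intro divide_left_mono mult_left_mono real_sqrt_le_mono mult_pos_pos real_sqrt_gt_zero
      add_pos_nonneg) auto

locale adaspider =
  fixes n :: nat and g :: "nat \<Rightarrow> 'a::euclidean_space \<Rightarrow> 'a" and gF :: "'a \<Rightarrow> 'a"
    and x0 :: 'a and \<beta>0 G0 L :: real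
  assumes n_pos: "n \<ge> 1" and \<beta>0_pos: "\<beta>0 > 0" and G0_pos: "G0 > 0"
    and gF_mean: "\<And>x. gF x = (1 / n) *\<^sub>R (\<Sum>i=1..n. g i x)"
    and lipschitz: "\<And>i x y. i \<in> {1..n} \<Longrightarrow> norm (g i x - g i y) \<le> L * norm (x - y)"
begin

abbreviation "iter \<equiv> ada_x n g gF x0 \<beta>0 G0"
abbreviation "est \<equiv> ada_grad n g gF x0 \<beta>0 G0"
abbreviation "gam \<equiv> ada_gamma n g gF x0 \<beta>0 G0"

definition err :: "(nat \<Rightarrow> nat) \<Rightarrow> nat \<Rightarrow> 'a" where
  "err w t = est w t - gF (iter w t)"

definition weighted_err :: "nat \<Rightarrow> nat \<Rightarrow> real" where
  "weighted_err T t = (\<Sum>w\<in>ada_omega n T. gam w t * (norm (err w t))\<^sup>2)"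

definition weighted_est :: "nat \<Rightarrow> nat \<Rightarrow> real" where
  "weighted_est T t = (\<Sum>w\<in>ada_omega n T. gam w t ^ 3 * (norm (est w t))\<^sup>2)"

lemma gam_pos: "gam w t > 0"
  using n_pos \<beta>0_pos G0_pos by (simp add: ada_gamma_eq_stepsize ada_stepsize_pos sum_nonneg)

lemma gam_Suc_le: "gam w (Suc t) \<le> gam w t"
  using n_pos \<beta>0_pos G0_pos by (simp add: ada_gamma_eq_stepsize ada_stepsize_antimono sum_nonneg)

lemma weighted_est_nonneg: "weighted_est T t \<ge> 0"
  unfolding weighted_est_def using gam_pos by (simp add: sum_nonneg less_imp_le)

lemma err_block_start: "t mod n = 0 \<Longrightarrow> err w t = 0"
  by (cases t) (simp_all add: err_def ada_grad_0 ada_grad_Suc)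

lemma err_Suc_fun_upd:
  assumes "Suc t mod n \<noteq> 0"
  shows "err (w(Suc t := i)) (Suc t) =
    err w t + ((g i (iter w (Suc t)) - g i (iter w t)) - (gF (iter w (Suc t)) - gF (iter w t)))"
proof -
  have "ada_state n g gF x0 \<beta>0 G0 (w(Suc t := i)) t = ada_state n g gF x0 \<beta>0 G0 w t"
    by (simp add: ada_state_fun_upd_future)
  then have past: "iter (w(Suc t := i)) t = iter w t" "est (w(Suc t := i)) t = est w t"
      "gam (w(Suc t := i)) t = gam w t"
    by (simp_all add: ada_x_def ada_grad_def ada_gamma_def)
  then have "iter (w(Suc t := i)) (Suc t) = iter w (Suc t)"
    by (simp add: ada_x_Suc)
  with past assms show ?thesis
    by (simp add: err_def ada_grad_Suc)
qed

lemma sum_err_Suc_fun_upd_le: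
  assumes "Suc t mod n \<noteq> 0"
  shows "(\<Sum>i=1..n. (norm (err (w(Suc t := i)) (Suc t)))\<^sup>2)
    \<le> n * (norm (err w t))\<^sup>2 + n * (L * (gam w t * norm (est w t)))\<^sup>2"
proof -
  define x x' where "x = iter w t" and "x' = iter w (Suc t)"
  have "gF x' - gF x = (1 / card {1..n}) *\<^sub>R (\<Sum>i=1..n. g i x' - g i x)"
    by (simp add: gF_mean sum_subtractf scaleR_diff_right)
  moreover have "norm (g i x' - g i x) \<le> L * (gam w t * norm (est w t))" if "i \<in> {1..n}" for i
    using lipschitz[OF that, of x' x] gam_pos[of w t] by (simp add: x_def x'_def ada_x_Suc)
  ultimately show ?thesis
    using sum_norm_add_centered_le[of "{1..n}" "\<lambda>i. g i x' - g i x" _ "err w t"]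
    by (simp add: err_Suc_fun_upd[OF assms] x_def x'_def)
qed

lemma weighted_err_Suc_le:
  assumes "Suc t < T" and "Suc t mod n \<noteq> 0"
  shows "weighted_err T (Suc t) \<le> weighted_err T t + L\<^sup>2 * weighted_est T t"
proof -
  have gam_fun_upd: "gam (w(Suc t := i)) t = gam w t" for w i
    by (simp add: ada_gamma_def ada_state_fun_upd_future)
  have "n * weighted_err T (Suc t)
      \<le> n * (\<Sum>w\<in>ada_omega n T. gam w t * (norm (err w (Suc t)))\<^sup>2)"
    unfolding weighted_err_def by (intro mult_left_mono sum_mono mult_right_mono gam_Suc_le) auto
  also have "\<dots> = (\<Sum>w\<in>ada_omega n T.
      gam w t * (\<Sum>i=1..n. (norm (err (w(Suc t := i)) (Suc t)))\<^sup>2))"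
    using sum_PiE_resample[where t="Suc t" and S="{..<T}" and A="\<lambda>_. {1..n}"
        and F="\<lambda>w. gam w t * (norm (err w (Suc t)))\<^sup>2"] assms(1)
    by (simp add: ada_omega_def gam_fun_upd sum_distrib_left)
  also have "\<dots> \<le> (\<Sum>w\<in>ada_omega n T.
      gam w t * (n * (norm (err w t))\<^sup>2 + n * (L * (gam w t * norm (est w t)))\<^sup>2))"
    using gam_pos
    by (intro sum_mono mult_left_mono sum_err_Suc_fun_upd_le assms(2)) (simp add: less_imp_le)
  also have "\<dots> = n * (weighted_err T t + L\<^sup>2 * weighted_est T t)"
    by (simp add: weighted_err_def weighted_est_def sum_distrib_left sum.distrib power_mult_distrib
        algebra_simps power3_eq_cube power2_eq_square)
  finally show ?thesis using n_pos by simp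
qed

lemma weighted_err_le_block:
  "t < T \<Longrightarrow> weighted_err T t \<le> L\<^sup>2 * (\<Sum>s\<in>{t - t mod n..<t}. weighted_est T s)"
proof (induction t)
  case 0
  then show ?case by (simp add: weighted_err_def err_block_start)
next
  case (Suc t)
  show ?case
  proof (cases "Suc t mod n = 0")
    case True
    then show ?thesis by (simp add: weighted_err_def err_block_start)
  next
    case False
    then have "{Suc t - Suc t mod n..<Suc t} = insert t {t - t mod n..<t}"
      by (auto simp: mod_Suc split: if_splits)
    then show ?thesis
      using weighted_err_Suc_le[OF Suc.prems False] Suc
      by (simp add: algebra_simps)
  qed
qed

lemma sum_weighted_err_le:
  "(\<Sum>t<T. weighted_err T t) \<le> L\<^sup>2 * n * (\<Sum>t<T. weighted_est T t)"
proof -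
  have "weighted_err T t \<le> L\<^sup>2 * (\<Sum>s\<in>{t - n..<t}. weighted_est T s)" if "t < T" for t
  proof -
    have "t mod n \<le> n"
      using n_pos by (simp add: mod_le_divisor)
    then have "{t - t mod n..<t} \<subseteq> {t - n..<t}"
      by auto
    then have "(\<Sum>s\<in>{t - t mod n..<t}. weighted_est T s) \<le> (\<Sum>s\<in>{t - n..<t}. weighted_est T s)"
      by (intro sum_mono2) (simp_all add: weighted_est_nonneg)
    then show ?thesis
      using weighted_err_le_block[OF that] by (meson order_trans mult_left_mono zero_le_power2)
  qed
  then have "(\<Sum>t<T. weighted_err T t) \<le> (\<Sum>t<T. L\<^sup>2 * (\<Sum>s\<in>{t - n..<t}. weighted_est T s))"
    by (intro sum_mono) simp
  also have "\<dots> = L\<^sup>2 * (\<Sum>t<T. \<Sum>s\<in>{t - n..<t}. weighted_est T s)"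
    by (rule sum_distrib_left[symmetric])
  also have "\<dots> \<le> L\<^sup>2 * (n * (\<Sum>t<T. weighted_est T t))"
    by (intro mult_left_mono sum_sliding_window_le weighted_est_nonneg) simp
  finally show ?thesis by simp
qed

end

theorem lemma5:
  fixes f :: "nat \<Rightarrow> 'a::euclidean_space \<Rightarrow> real"
    and g :: "nat \<Rightarrow> 'a \<Rightarrow> 'a"
    and F :: "'a \<Rightarrow> real" and gF :: "'a \<Rightarrow> 'a"
    and n T :: nat and L \<beta>0 G0 :: real and x0 :: 'a
  assumes "n \<ge> 1" and "T \<ge> 1" and "\<beta>0 > 0" and "G0 > 0"
    and grad_fi: "\<And>i x. i \<in> {1..n} \<Longrightarrow> (f i has_derivative (\<lambda>h. g i x \<bullet> h)) (at x)"
    and smooth: "\<And>i x y. i \<in> {1..n} \<Longrightarrow> norm (g i x - g i y) \<le> L * norm (x - y)"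
    and F_def: "F = (\<lambda>x. (1 / real n) * (\<Sum>i=1..n. f i x))"
    and grad_F: "\<And>x. (F has_derivative (\<lambda>h. gF x \<bullet> h)) (at x)"
  shows "measure_pmf.expectation (pmf_of_set (ada_omega n T))
           (\<lambda>\<omega>. \<Sum>t<T. ada_gamma n g gF x0 \<beta>0 G0 \<omega> t *
                  (norm (ada_grad n g gF x0 \<beta>0 G0 \<omega> t - gF (ada_x n g gF x0 \<beta>0 G0 \<omega> t)))\<^sup>2)
       \<le> L\<^sup>2 * real n * measure_pmf.expectation (pmf_of_set (ada_omega n T))
           (\<lambda>\<omega>. \<Sum>t<T. (ada_gamma n g gF x0 \<beta>0 G0 \<omega> t) ^ 3 *
                  (norm (ada_grad n g gF x0 \<beta>0 G0 \<omega> t))\<^sup>2)"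
proof -
  have gF_mean: "gF x = (1 / n) *\<^sub>R (\<Sum>i=1..n. g i x)" for x
    using gradient_of_scaled_sum[where I="{1..n}" and x=x and g=g and gF="gF x",
        OF grad_fi grad_F F_def]
    by simp
  interpret adaspider n g gF x0 \<beta>0 G0 L
    by (rule adaspider.intro) (use assms(1,3,4) in \<open>simp_all add: gF_mean smooth\<close>)
  have fin: "finite (ada_omega n T)" and ne: "ada_omega n T \<noteq> {}"
    using \<open>n \<ge> 1\<close> by (simp_all add: ada_omega_def finite_PiE PiE_eq_empty_iff)
  have expectation_eq: "measure_pmf.expectation (pmf_of_set (ada_omega n T)) (\<lambda>w. \<Sum>t<T. h w t)
      = (\<Sum>t<T. \<Sum>w\<in>ada_omega n T. h w t) / card (ada_omega n T)" for h :: "_ \<Rightarrow> _ \<Rightarrow> real"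
    by (simp only: integral_pmf_of_set[OF ne fin]) (subst sum.swap, rule refl)
  have "(\<Sum>t<T. weighted_err T t) / card (ada_omega n T)
      \<le> L\<^sup>2 * n * ((\<Sum>t<T. weighted_est T t) / card (ada_omega n T))"
    using sum_weighted_err_le[of T] by (simp add: divide_right_mono)
  then show ?thesis
    by (simp only: expectation_eq weighted_err_def weighted_est_def err_def)
qed

end
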